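(* Let $X_1,X_2,\dots$ be iid with continuous distribution function $F\in\mathcal{D}(G)$ with norming constants $a_n>0$, $b_n\in\mathbb{R}$. Let $j=j(n)<k=k(n)$ be integers with $j/n\to\lambda_1>0$ and $k/n\to\lambda_2>\lambda_1$, and put $\beta_i=\lambda_i/(\lambda_2-\lambda_1)$, $i=1,2$. Then for all $y_1,y_2\in\mathbb{R}$, \[ \lim_{n\to\infty}\Pr\left(\frac{X_j-b_n}{a_n}\le y_1,\ \frac{X_k-b_n}{a_n}\le y_2\ \Big|\ X_j\text{ and }X_k\text{ are records}\right)=G_{\lambda_1,\lambda_2}(y_1,y_2), \] where \[ G_{\lambda_1,\lambda_2}(y_1,y_2)=\begin{cases} G(y_1)^{\lambda_1}\left(\beta_2G(y_2)^{\lambda_2-\lambda_1}-\beta_1G(y_1)^{\lambda_2-\lambda_1}\right), & \text{if } y_1<y_2,\\ G(y_2)^{\lambda_2}, & \text{if } y_1\ge y_2. \end{cases} \]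
   Context: $X_m$ is a record if $X_m>\max(X_1,\dots,X_{m-1})$; $X_1$ is always a record. $F\in\mathcal{D}(G)$ means $F^n(a_nx+b_n)\to G(x)$ as $n\to\infty$ for all $x$, where $G$ is a non-degenerate (hence continuous, extreme value) distribution function. *)

theory Defs
  imports "HOL-Probability.Probability"
begin

text \<open>X m is a record (at outcome w) if it exceeds all of X 1, ..., X (m-1);
  indices start at 1, so X 1 is always a record.\<close>
definition is_record :: "(nat \<Rightarrow> 'a \<Rightarrow> real) \<Rightarrow> nat \<Rightarrow> 'a \<Rightarrow> bool" where
  "is_record X m w \<longleftrightarrow> (\<forall>i\<in>{1..<m}. X i w < X m w)"

definition distribution_function :: "(real \<Rightarrow> real) \<Rightarrow> bool" where
  "distribution_function G \<longleftrightarrow> mono G \<and> (G \<longlongrightarrow> 0) at_bot \<and> (G \<longlongrightarrow> 1) at_top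
     \<and> (\<forall>x. continuous (at_right x) G)"

definition nondegenerate :: "(real \<Rightarrow> real) \<Rightarrow> bool" where
  "nondegenerate G \<longleftrightarrow> (\<exists>x. 0 < G x \<and> G x < 1)"

definition max_domain_attr ::
    "(real \<Rightarrow> real) \<Rightarrow> (real \<Rightarrow> real) \<Rightarrow> (nat \<Rightarrow> real) \<Rightarrow> (nat \<Rightarrow> real) \<Rightarrow> bool" where
  "max_domain_attr F G a b \<longleftrightarrow> distribution_function G \<and> nondegenerate G \<and> (\<forall>n. a n > 0)
     \<and> (\<forall>x. (\<lambda>n. F (a n * x + b n) ^ n) \<longlonglongrightarrow> G x)"

definition G_lam :: "(real \<Rightarrow> real) \<Rightarrow> real \<Rightarrow> real \<Rightarrow> real \<Rightarrow> real \<Rightarrow> real" where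
  "G_lam G l1 l2 y1 y2 =
     (let b1 = l1 / (l2 - l1); b2 = l2 / (l2 - l1) in
      if y1 < y2 then G y1 powr l1 * (b2 * G y2 powr (l2 - l1) - b1 * G y1 powr (l2 - l1))
      else G y2 powr l2)"

end

theory Submission
  imports Defs
begin

text \<open>For iid observations with a continuous distribution function F there are almost surely no
  ties, and the joint law of X_1, ..., X_m is invariant under permutations of the indices. Hence
  the position of the maximum of X_1, ..., X_m is uniformly distributed on {1..m}, also on any
  event that is symmetric in the indices concerned; in particular X_j and X_k (j < k) are both
  records with probability 1/(jk). Splitting the event {X_1, ..., X_j \<le> c_1, X_(j+1), ..., X_k \<le> c_2}
  (c_1 \<le> c_2) according to the position of the maximum of X_1, ..., X_k gives the exact formula
  P(X_j \<le> c_1, X_k \<le> c_2 | both records) = (k F(c_1)^j F(c_2)^(k-j) - j F(c_1)^k) / (k - j):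
  a maximum in the first block forces all k observations below c_1, and the k - j positions of
  the second block are equally likely. With c_i = a_n y_i + b_n, finally,
  F(c_i)^m = (F(c_i)^n)^(m/n) tends to G(y_i)^\<lambda> whenever m/n tends to \<lambda>.\<close>

definition strict_argmax :: "nat set \<Rightarrow> nat \<Rightarrow> (nat \<Rightarrow> real) \<Rightarrow> bool" where
  "strict_argmax S i x \<longleftrightarrow> (\<forall>l\<in>S - {i}. x l < x i)"

definition below_on :: "nat set \<Rightarrow> real \<Rightarrow> (nat \<Rightarrow> real) \<Rightarrow> bool" where
  "below_on L c x \<longleftrightarrow> (\<forall>l\<in>L. x l \<le> c)"

lemma is_record_iff_strict_argmax: "is_record X m w \<longleftrightarrow> strict_argmax {1..m} m (\<lambda>l. X l w)"
  unfolding is_record_def strict_argmax_def by (auto simp: atLeastLessThan_def atLeastAtMost_def)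

lemma strict_argmax_unique:
  "strict_argmax S i x \<Longrightarrow> strict_argmax S i' x \<Longrightarrow> i \<in> S \<Longrightarrow> i' \<in> S \<Longrightarrow> i = i'"
  unfolding strict_argmax_def by (metis DiffI less_asym singletonD)

lemma ex_strict_argmax:
  assumes "finite S" "S \<noteq> {}" "inj_on x S"
  obtains i where "i \<in> S" "strict_argmax S i x"
proof -
  have "Max (x ` S) \<in> x ` S" using assms(1,2) by simp
  then obtain i where i: "i \<in> S" "x i = Max (x ` S)" by (metis imageE)
  have "x l < x i" if "l \<in> S - {i}" for l
  proof -
    have "x l \<le> x i" using i(2) that assms(1) by simp
    moreover have "x l \<noteq> x i" using that i(1) assms(3) by (auto simp: inj_on_eq_iff)
    ultimately show ?thesis by simp
  qed
  with i show ?thesis using that by (auto simp: strict_argmax_def)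
qed

lemma strict_argmax_le: "strict_argmax S i x \<Longrightarrow> l \<in> S \<Longrightarrow> x l \<le> x i"
  unfolding strict_argmax_def by (cases "l = i") (auto dest!: bspec[where x=l])

lemma strict_argmax_comp_permutes:
  assumes "\<sigma> permutes S"
  shows "strict_argmax S i (x \<circ> \<sigma>) = strict_argmax S (\<sigma> i) x"
proof -
  have image: "\<sigma> ` (S - {i}) = S - {\<sigma> i}"
    using assms by (simp add: image_set_diff permutes_inj permutes_image)
  show ?thesis unfolding strict_argmax_def by (simp flip: image)
qed

lemma below_on_comp:
  assumes "\<sigma> ` L = L" shows "below_on L c (x \<circ> \<sigma>) = below_on L c x"
  unfolding below_on_def by (subst (2) assms[symmetric]) simp

lemma below_on_comp_transpose:
  "(a \<in> L \<longleftrightarrow> b \<in> L) \<Longrightarrow> below_on L c (x \<circ> Transposition.transpose a b) = below_on L c x"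
  by (simp add: below_on_comp)

lemma below_on_strict_argmax_iff:
  assumes "i \<in> L\<^sub>1" "c\<^sub>1 \<le> c\<^sub>2"
  shows "(below_on L\<^sub>1 c\<^sub>1 x \<and> below_on L\<^sub>2 c\<^sub>2 x \<and> strict_argmax (L\<^sub>1 \<union> L\<^sub>2) i x)
     \<longleftrightarrow> (below_on (L\<^sub>1 \<union> L\<^sub>2) c\<^sub>1 x \<and> strict_argmax (L\<^sub>1 \<union> L\<^sub>2) i x)"
proof -
  have "below_on (L\<^sub>1 \<union> L\<^sub>2) c\<^sub>1 x" if "x i \<le> c\<^sub>1" "strict_argmax (L\<^sub>1 \<union> L\<^sub>2) i x"
    using that strict_argmax_le[OF that(2)] unfolding below_on_def by (meson order.trans)
  moreover have "below_on L\<^sub>2 c\<^sub>2 x" if "below_on (L\<^sub>1 \<union> L\<^sub>2) c\<^sub>1 x"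
    using that assms(2) unfolding below_on_def by (meson UnI2 order.trans)
  ultimately show ?thesis using assms(1) unfolding below_on_def by auto
qed

lemma two_records_le_iff:
  assumes "1 \<le> J" "J < K"
  shows "(x J \<le> c\<^sub>1 \<and> x K \<le> c\<^sub>2 \<and> strict_argmax {1..J} J x \<and> strict_argmax {1..K} K x)
     \<longleftrightarrow> (below_on {1..J} (min c\<^sub>1 c\<^sub>2) x \<and> below_on {Suc J..K} c\<^sub>2 x
          \<and> strict_argmax {1..K} K x \<and> strict_argmax {1..J} J x)"
proof
  assume h: "x J \<le> c\<^sub>1 \<and> x K \<le> c\<^sub>2 \<and> strict_argmax {1..J} J x \<and> strict_argmax {1..K} K x"
  then have "x J < x K" using assms by (auto simp: strict_argmax_def)
  moreover have "x l \<le> x J" if "l \<in> {1..J}" for l using h that strict_argmax_le[of "{1..J}" J x l] by simp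
  moreover have "x l \<le> x K" if "l \<in> {Suc J..K}" for l using h that strict_argmax_le[of "{1..K}" K x l] by simp
  ultimately show "below_on {1..J} (min c\<^sub>1 c\<^sub>2) x \<and> below_on {Suc J..K} c\<^sub>2 x
          \<and> strict_argmax {1..K} K x \<and> strict_argmax {1..J} J x"
    using h unfolding below_on_def by force
next
  assume "below_on {1..J} (min c\<^sub>1 c\<^sub>2) x \<and> below_on {Suc J..K} c\<^sub>2 x
          \<and> strict_argmax {1..K} K x \<and> strict_argmax {1..J} J x"
  moreover have "J \<in> {1..J}" "K \<in> {Suc J..K}" using assms by auto
  ultimately show "x J \<le> c\<^sub>1 \<and> x K \<le> c\<^sub>2 \<and> strict_argmax {1..J} J x \<and> strict_argmax {1..K} K x"
    unfolding below_on_def by auto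
qed

text \<open>Events determined by the finitely many coordinates in I; invariance under \<open>restrict\<close> lets such
  a predicate be applied to the whole sequence \<open>\<lambda>i. X i w\<close>.\<close>

definition cylinder_pred :: "nat set \<Rightarrow> ((nat \<Rightarrow> real) \<Rightarrow> bool) \<Rightarrow> bool" where
  "cylinder_pred I Q \<longleftrightarrow> Measurable.pred (PiM I (\<lambda>_. borel)) Q \<and> (\<forall>x. Q x = Q (restrict x I))"

lemma cylinder_pred_restrict: "cylinder_pred I Q \<Longrightarrow> Q x = Q (restrict x I)"
  unfolding cylinder_pred_def by blast

lemma cylinder_pred_sets:
  "cylinder_pred I Q \<Longrightarrow> {x\<in>space (PiM I (\<lambda>_. borel)). Q x} \<in> sets (PiM I (\<lambda>_. borel))"
  unfolding cylinder_pred_def pred_def by blast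

lemma cylinder_pred_const: "cylinder_pred I (\<lambda>_. P)"
  unfolding cylinder_pred_def by simp

lemma cylinder_pred_conj:
  assumes "cylinder_pred I P" "cylinder_pred I Q" shows "cylinder_pred I (\<lambda>x. P x \<and> Q x)"
  using assms unfolding cylinder_pred_def by (metis pred_intros_logic(3))

lemma cylinder_pred_ball:
  assumes "finite L" "\<And>l. l \<in> L \<Longrightarrow> cylinder_pred I (P l)"
  shows "cylinder_pred I (\<lambda>x. \<forall>l\<in>L. P l x)"
  unfolding cylinder_pred_def
proof
  show "Measurable.pred (PiM I (\<lambda>_. borel)) (\<lambda>x. \<forall>l\<in>L. P l x)"
    by (rule pred_intros_finite(3)[OF assms(1)]) (use assms(2) in \<open>unfold cylinder_pred_def, blast\<close>)
  show "\<forall>x. (\<forall>l\<in>L. P l x) = (\<forall>l\<in>L. P l (restrict x I))"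
    using assms(2) unfolding cylinder_pred_def by blast
qed

lemma cylinder_pred_less:
  assumes "l \<in> I" "m \<in> I" shows "cylinder_pred I (\<lambda>x. x l < x m)"
proof -
  note [measurable] = measurable_component_singleton[OF assms(1)] measurable_component_singleton[OF assms(2)]
  show ?thesis using assms unfolding cylinder_pred_def by simp
qed

lemma cylinder_pred_le:
  assumes "l \<in> I" shows "cylinder_pred I (\<lambda>x. x l \<le> c)"
proof -
  note [measurable] = measurable_component_singleton[OF assms(1)]
  show ?thesis using assms unfolding cylinder_pred_def by simp
qed

lemma cylinder_pred_strict_argmax:
  assumes "finite S" "S \<subseteq> I" "i \<in> I" shows "cylinder_pred I (strict_argmax S i)"
  unfolding strict_argmax_def[abs_def]
proof (rule cylinder_pred_ball)
  show "cylinder_pred I (\<lambda>x. x l < x i)" if "l \<in> S - {i}" for l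
    using assms that by (intro cylinder_pred_less) auto
qed (use assms in simp)

lemma cylinder_pred_below_on:
  assumes "finite L" "L \<subseteq> I" shows "cylinder_pred I (below_on L c)"
  unfolding below_on_def[abs_def]
proof (rule cylinder_pred_ball)
  show "cylinder_pred I (\<lambda>x. x l \<le> c)" if "l \<in> L" for l
    using assms that by (intro cylinder_pred_le) auto
qed (use assms in simp)

lemma (in prob_space) AE_neq_of_indep_atomless:
  fixes Y Z :: "'a \<Rightarrow> real"
  assumes indep: "indep_var borel Y borel Z" and atomless: "\<And>z. measure (distr M borel Z) {z} = 0"
  shows "AE w in M. Y w \<noteq> Z w"
proof -
  have Y: "random_variable borel Y" and Z: "random_variable borel Z"
    using indep by (auto simp: indep_var_distribution_eq)
  interpret Z: prob_space "distr M borel Z" using Z by (rule prob_space_distr)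
  let ?diag = "{p :: real \<times> real. fst p = snd p}"
  have "{p\<in>space (borel \<Otimes>\<^sub>M borel). fst p = (snd p :: real)} \<in> sets (borel \<Otimes>\<^sub>M borel)" by measurable
  then have diag: "?diag \<in> sets (borel \<Otimes>\<^sub>M borel)" by (simp add: space_pair_measure)
  have "emeasure M {w\<in>space M. Y w = Z w} = emeasure (distr M (borel \<Otimes>\<^sub>M borel) (\<lambda>w. (Y w, Z w))) ?diag"
    using Y Z diag by (subst emeasure_distr) (auto intro!: arg_cong[where f="emeasure M"])
  also have "\<dots> = emeasure (distr M borel Y \<Otimes>\<^sub>M distr M borel Z) ?diag"
    using indep by (simp add: indep_var_distribution_eq)
  also have "\<dots> = (\<integral>\<^sup>+y. emeasure (distr M borel Z) (Pair y -` ?diag) \<partial>distr M borel Y)"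
    using diag by (intro Z.emeasure_pair_measure_alt) (simp cong: sets_pair_measure_cong)
  also have "\<dots> = 0"
    using atomless Z.emeasure_eq_measure by (simp add: vimage_def)
  finally show ?thesis
    using Y Z by (subst AE_iff_measurable[OF _ refl]) auto
qed

locale iid_continuous = prob_space +
  fixes X :: "nat \<Rightarrow> 'a \<Rightarrow> real" and F :: "real \<Rightarrow> real"
  assumes random_variable_X: "\<And>i. i \<ge> 1 \<Longrightarrow> X i \<in> borel_measurable M"
    and indep_X: "indep_vars (\<lambda>_. borel) X {1..}"
    and cdf_X: "\<And>i x. i \<ge> 1 \<Longrightarrow> F x = prob {w \<in> space M. X i w \<le> x}"
    and continuous_F: "continuous_on UNIV F"
begin

definition law :: "real measure" where
  "law = distr M borel (X 1)"

lemma cdf_distr_X: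
  assumes "i \<ge> 1" shows "cdf (distr M borel (X i)) = F"
proof
  fix x show "cdf (distr M borel (X i)) x = F x"
    unfolding cdf_def using random_variable_X[OF assms] cdf_X[OF assms]
    by (subst measure_distr) (auto intro!: arg_cong[where f=prob])
qed

lemma real_distribution_distr_X: "i \<ge> 1 \<Longrightarrow> real_distribution (distr M borel (X i))"
  using random_variable_X by simp

lemma distr_X_eq_law: "i \<ge> 1 \<Longrightarrow> distr M borel (X i) = law"
  unfolding law_def
  by (intro cdf_unique real_distribution_distr_X) (auto simp: cdf_distr_X)

lemma measure_law_singleton: "measure law {t} = 0"
proof -
  interpret law: real_distribution law using real_distribution_distr_X[of 1] by (simp add: law_def)
  have "isCont F t" using continuous_F by (simp add: continuous_on_eq_continuous_at)
  then show ?thesis using law.isCont_cdf cdf_distr_X[of 1] by (simp add: law_def)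
qed

lemma AE_X_neq: "l \<ge> 1 \<Longrightarrow> m \<ge> 1 \<Longrightarrow> l \<noteq> m \<Longrightarrow> AE w in M. X l w \<noteq> X m w"
proof (rule AE_neq_of_indep_atomless)
  assume lm: "l \<ge> 1" "m \<ge> 1" "l \<noteq> m"
  have "indep_var (PiM {l} (\<lambda>_. borel)) (\<lambda>\<omega>. restrict (\<lambda>i. X i \<omega>) {l})
      (PiM {m} (\<lambda>_. borel)) (\<lambda>\<omega>. restrict (\<lambda>i. X i \<omega>) {m})"
    using lm by (intro indep_var_restrict[OF indep_X]) auto
  from indep_var_compose[OF this, of "\<lambda>f. f l" borel "\<lambda>f. f m" borel]
  show "indep_var borel (X l) borel (X m)"
    by (simp add: comp_def measurable_component_singleton)
  show "measure (distr M borel (X m)) {z} = 0" for z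
    using lm distr_X_eq_law measure_law_singleton by simp
qed

lemma AE_inj_on_X: "finite S \<Longrightarrow> S \<subseteq> {1..} \<Longrightarrow> AE w in M. inj_on (\<lambda>l. X l w) S"
proof -
  assume S: "finite S" "S \<subseteq> {1..}"
  have "AE w in M. \<forall>l\<in>S. \<forall>m\<in>S - {l}. X l w \<noteq> X m w"
    using S AE_X_neq by (intro AE_finite_allI) auto
  then show ?thesis by eventually_elim (auto simp: inj_on_def)
qed

lemma cylinder_pred_events:
  assumes "finite I" "I \<subseteq> {1..}" "cylinder_pred I Q"
  shows "{w\<in>space M. Q (\<lambda>i. X i w)} \<in> events"
proof -
  let ?f = "\<lambda>w. \<lambda>i\<in>I. X i w"
  have f: "?f \<in> measurable M (PiM I (\<lambda>_. borel))"
    using random_variable_X assms(2) by (intro measurable_restrict) auto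
  have "{w\<in>space M. Q (\<lambda>i. X i w)} = ?f -` {x\<in>space (PiM I (\<lambda>_. borel)). Q x} \<inter> space M"
    using measurable_space[OF f] by (auto simp: cylinder_pred_restrict[OF assms(3), of "\<lambda>i. X i _"])
  also have "\<dots> \<in> events"
    using f cylinder_pred_sets[OF assms(3)] by (rule measurable_sets)
  finally show ?thesis .
qed

lemma distr_restrict_X:
  assumes I: "finite I" "I \<noteq> {}" "I \<subseteq> {1..}"
  shows "distr M (PiM I (\<lambda>_. borel)) (\<lambda>w. \<lambda>i\<in>I. X i w) = PiM I (\<lambda>_. law)"
proof -
  have X_meas: "i \<in> I \<Longrightarrow> X i \<in> borel_measurable M" for i using random_variable_X I(3) by auto
  then have "distr M (PiM I (\<lambda>_. borel)) (\<lambda>w. \<lambda>i\<in>I. X i w) = PiM I (\<lambda>i. distr M borel (X i))"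
    using indep_vars_subset[OF indep_X I(3)] I(2)
      indep_vars_iff_distr_eq_PiM'[where M'="\<lambda>_. borel" and X=X and I=I] by simp
  also have "\<dots> = PiM I (\<lambda>_. law)" using I(3) distr_X_eq_law by (intro PiM_cong) auto
  finally show ?thesis .
qed

lemma prob_comp_permutes:
  assumes I: "finite I" "I \<noteq> {}" "I \<subseteq> {1..}" and \<sigma>: "\<sigma> permutes I" and Q: "cylinder_pred I Q"
  shows "prob {w\<in>space M. Q (\<lambda>i. X (\<sigma> i) w)} = prob {w\<in>space M. Q (\<lambda>i. X i w)}"
proof -
  let ?P = "PiM I (\<lambda>_. borel :: real measure)"
  let ?f = "\<lambda>w. \<lambda>i\<in>I. X i w"
  let ?g = "\<lambda>w. \<lambda>i\<in>I. X (\<sigma> i) w"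
  let ?t = "\<lambda>x. \<lambda>i\<in>I. x (\<sigma> i)"
  let ?S = "{x\<in>space ?P. Q x}"
  have \<sigma>_in: "\<sigma> i \<in> I" if "i \<in> I" for i using \<sigma> that by (simp add: permutes_in_image)
  have X_meas: "i \<in> I \<Longrightarrow> X i \<in> borel_measurable M" for i using random_variable_X I(3) by auto
  have f: "?f \<in> measurable M ?P" and g: "?g \<in> measurable M ?P"
    using X_meas \<sigma>_in by (intro measurable_restrict; auto)+
  have t: "?t \<in> measurable ?P ?P"
    using \<sigma>_in by (intro measurable_restrict measurable_component_singleton) auto
  have S: "?S \<in> sets ?P" using Q by (rule cylinder_pred_sets)
  have sets_law: "sets (PiM I (\<lambda>_. law)) = sets ?P" by (rule sets_PiM_cong) (auto simp: law_def)
  have distr_f: "distr M ?P ?f = PiM I (\<lambda>_. law)" using I by (rule distr_restrict_X)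
  have distr_g: "distr M ?P ?g = PiM I (\<lambda>_. law)"
  proof -
    have "distr M ?P ?g = distr (distr M ?P ?f) ?P ?t"
      using distr_distr[OF t f] \<sigma>_in by (simp add: comp_def restrict_def cong: if_cong)
    also have "\<dots> = distr (PiM I (\<lambda>_. law)) (PiM I (\<lambda>_. law)) ?t"
      using distr_f sets_law by (intro distr_cong) auto
    also have "\<dots> = PiM I (\<lambda>_. law)"
      using distr_PiM_reindex[of I "\<lambda>_. law" \<sigma> I] real_distribution_distr_X[of 1] \<sigma> \<sigma>_in
      by (auto simp: permutes_inj_on law_def real_distribution_def)
    finally show ?thesis .
  qed
  have "prob {w\<in>space M. Q (\<lambda>i. X (\<sigma> i) w)} = prob (?g -` ?S \<inter> space M)"
    using g by (auto intro!: arg_cong[where f=prob]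
        simp: cylinder_pred_restrict[OF Q, of "\<lambda>i. X (\<sigma> i) _"] measurable_space space_PiM)
  also have "\<dots> = measure (distr M ?P ?g) ?S" using g S by (rule measure_distr[symmetric])
  also have "\<dots> = measure (distr M ?P ?f) ?S" using distr_f distr_g by simp
  also have "\<dots> = prob (?f -` ?S \<inter> space M)" using f S by (rule measure_distr)
  also have "\<dots> = prob {w\<in>space M. Q (\<lambda>i. X i w)}"
    using f by (auto intro!: arg_cong[where f=prob]
        simp: cylinder_pred_restrict[OF Q, of "\<lambda>i. X i _"] measurable_space space_PiM)
  finally show ?thesis .
qed

lemma prob_strict_argmax_transpose:
  assumes I: "finite I" "I \<subseteq> {1..}" and S: "finite S" "S \<subseteq> I" "i \<in> S" "i' \<in> S"
    and T: "cylinder_pred I T" "\<And>x. T (x \<circ> Transposition.transpose i i') = T x"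
  shows "prob {w\<in>space M. T (\<lambda>l. X l w) \<and> strict_argmax S i (\<lambda>l. X l w)}
       = prob {w\<in>space M. T (\<lambda>l. X l w) \<and> strict_argmax S i' (\<lambda>l. X l w)}"
proof -
  let ?\<sigma> = "Transposition.transpose i i'"
  have \<sigma>: "?\<sigma> permutes S" using S by (intro permutes_swap_id) auto
  have TS: "cylinder_pred I (\<lambda>x. T x \<and> strict_argmax S i x)"
    using S T(1) by (intro cylinder_pred_conj cylinder_pred_strict_argmax) auto
  have "prob {w\<in>space M. T (\<lambda>l. X (?\<sigma> l) w) \<and> strict_argmax S i (\<lambda>l. X (?\<sigma> l) w)}
      = prob {w\<in>space M. T (\<lambda>l. X l w) \<and> strict_argmax S i (\<lambda>l. X l w)}"
    by (rule prob_comp_permutes[OF I(1) _ I(2) permutes_subset[OF \<sigma> S(2)] TS]) (use S in auto)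
  moreover have "(\<lambda>l. X (?\<sigma> l) w) = (\<lambda>l. X l w) \<circ> ?\<sigma>" for w by (simp add: comp_def)
  ultimately show ?thesis using T(2) strict_argmax_comp_permutes[OF \<sigma>] by simp
qed

lemma sum_prob_strict_argmax:
  assumes I: "finite I" "I \<subseteq> {1..}" and S: "S \<subseteq> I" "S \<noteq> {}" and T: "cylinder_pred I T"
  shows "(\<Sum>i\<in>S. prob {w\<in>space M. T (\<lambda>l. X l w) \<and> strict_argmax S i (\<lambda>l. X l w)})
       = prob {w\<in>space M. T (\<lambda>l. X l w)}"
proof -
  define E where "E i = {w\<in>space M. T (\<lambda>l. X l w) \<and> strict_argmax S i (\<lambda>l. X l w)}" for i
  have S_fin: "finite S" using I(1) S(1) by (rule finite_subset[rotated])
  have E: "E i \<in> events" if "i \<in> S" for i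
  proof -
    have "cylinder_pred I (\<lambda>x. T x \<and> strict_argmax S i x)"
      using S(1) S_fin T that by (intro cylinder_pred_conj cylinder_pred_strict_argmax) auto
    from cylinder_pred_events[OF I this] show ?thesis unfolding E_def .
  qed
  have "(\<Sum>i\<in>S. prob (E i)) = prob (\<Union>i\<in>S. E i)"
    using S_fin E by (intro finite_measure_finite_Union[symmetric])
      (auto simp: disjoint_family_on_def E_def dest: strict_argmax_unique)
  also have "\<dots> = prob {w\<in>space M. T (\<lambda>l. X l w)}"
  proof (rule measure_eq_AE)
    have "AE w in M. inj_on (\<lambda>l. X l w) S" using S_fin S(1) I(2) by (intro AE_inj_on_X) auto
    then show "AE w in M. w \<in> (\<Union>i\<in>S. E i) \<longleftrightarrow> w \<in> {w\<in>space M. T (\<lambda>l. X l w)}"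
    proof eventually_elim
      case (elim w)
      then show ?case using ex_strict_argmax[OF S_fin S(2) elim] by (auto simp: E_def)
    qed
    show "(\<Union>i\<in>S. E i) \<in> events" using S_fin E by auto
    show "{w\<in>space M. T (\<lambda>l. X l w)} \<in> events" using I T by (rule cylinder_pred_events)
  qed
  finally show ?thesis unfolding E_def .
qed

lemma prob_strict_argmax_uniform:
  assumes I: "finite I" "I \<subseteq> {1..}" and S: "S \<subseteq> I" "i\<^sub>0 \<in> S"
    and T: "cylinder_pred I T" "\<And>i x. i \<in> S \<Longrightarrow> T (x \<circ> Transposition.transpose i i\<^sub>0) = T x"
  shows "prob {w\<in>space M. T (\<lambda>l. X l w) \<and> strict_argmax S i\<^sub>0 (\<lambda>l. X l w)}
       = prob {w\<in>space M. T (\<lambda>l. X l w)} / card S"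
proof -
  let ?p = "\<lambda>i. prob {w\<in>space M. T (\<lambda>l. X l w) \<and> strict_argmax S i (\<lambda>l. X l w)}"
  have S_fin: "finite S" using I(1) S(1) by (rule finite_subset[rotated])
  have "prob {w\<in>space M. T (\<lambda>l. X l w)} = (\<Sum>i\<in>S. ?p i)"
    using S by (intro sum_prob_strict_argmax[OF I _ _ T(1), symmetric]) auto
  also have "\<dots> = (\<Sum>i\<in>S. ?p i\<^sub>0)"
  proof (rule sum.cong[OF refl])
    fix i assume "i \<in> S"
    show "?p i = ?p i\<^sub>0"
      by (rule prob_strict_argmax_transpose[OF I S_fin S(1) \<open>i \<in> S\<close> S(2) T(1) T(2)[OF \<open>i \<in> S\<close>]])
  qed
  also have "\<dots> = card S * ?p i\<^sub>0" by simp
  finally show ?thesis using S_fin S(2) by (auto simp: card_gt_0_iff field_simps)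
qed

lemma prob_all_le:
  assumes "finite L" "L \<subseteq> {1..}"
  shows "prob {w\<in>space M. \<forall>l\<in>L. X l w \<le> c l} = (\<Prod>l\<in>L. F (c l))"
proof (cases "L = {}")
  case False
  have "prob {w\<in>space M. \<forall>l\<in>L. X l w \<le> c l} = prob (\<Inter>l\<in>L. X l -` {..c l} \<inter> space M)"
    using False by (intro arg_cong[where f=prob]) auto
  also have "\<dots> = (\<Prod>l\<in>L. prob (X l -` {..c l} \<inter> space M))"
  proof (rule indep_setsD)
    show "indep_sets (\<lambda>i. {X i -` A \<inter> space M | A. A \<in> sets borel}) {1..}"
      using indep_X unfolding indep_vars_def2 by blast
    have "{..c l} \<in> sets borel" for l by simp
    then show "\<forall>l\<in>L. X l -` {..c l} \<inter> space M \<in> {X l -` A \<inter> space M | A. A \<in> sets borel}"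
      by blast
  qed (use assms False in auto)
  also have "\<dots> = (\<Prod>l\<in>L. F (c l))"
  proof (rule prod.cong[OF refl])
    fix l assume "l \<in> L"
    then have "F (c l) = prob {w\<in>space M. X l w \<le> c l}" using assms(2) cdf_X[of l "c l"] by auto
    moreover have "X l -` {..c l} \<inter> space M = {w\<in>space M. X l w \<le> c l}" by auto
    ultimately show "prob (X l -` {..c l} \<inter> space M) = F (c l)" by simp
  qed
  finally show ?thesis .
qed (simp add: prob_space)

lemma prob_below_on_below_on:
  assumes L: "finite L\<^sub>1" "finite L\<^sub>2" "L\<^sub>1 \<subseteq> {1..}" "L\<^sub>2 \<subseteq> {1..}" "L\<^sub>1 \<inter> L\<^sub>2 = {}"
  shows "prob {w\<in>space M. below_on L\<^sub>1 c\<^sub>1 (\<lambda>l. X l w) \<and> below_on L\<^sub>2 c\<^sub>2 (\<lambda>l. X l w)}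
       = F c\<^sub>1 ^ card L\<^sub>1 * F c\<^sub>2 ^ card L\<^sub>2"
proof -
  define c where "c l = (if l \<in> L\<^sub>1 then c\<^sub>1 else c\<^sub>2)" for l
  have "prob {w\<in>space M. below_on L\<^sub>1 c\<^sub>1 (\<lambda>l. X l w) \<and> below_on L\<^sub>2 c\<^sub>2 (\<lambda>l. X l w)}
      = prob {w\<in>space M. \<forall>l\<in>L\<^sub>1 \<union> L\<^sub>2. X l w \<le> c l}"
    using L(5) by (intro arg_cong[where f=prob]) (auto simp: below_on_def c_def)
  also have "\<dots> = (\<Prod>l\<in>L\<^sub>1. F (c l)) * (\<Prod>l\<in>L\<^sub>2. F (c l))"
    using L by (simp add: prob_all_le prod.union_disjoint)
  also have "\<dots> = (\<Prod>l\<in>L\<^sub>1. F c\<^sub>1) * (\<Prod>l\<in>L\<^sub>2. F c\<^sub>2)"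
    using L(5) by (intro arg_cong2[where f="(*)"] prod.cong) (auto simp: c_def)
  finally show ?thesis by simp
qed

lemma prob_below_on_strict_argmax_first_block:
  assumes L: "finite L\<^sub>1" "finite L\<^sub>2" "L\<^sub>1 \<subseteq> {1..}" "L\<^sub>2 \<subseteq> {1..}"
    and i: "i \<in> L\<^sub>1" and c: "c\<^sub>1 \<le> c\<^sub>2"
  shows "prob {w\<in>space M. below_on L\<^sub>1 c\<^sub>1 (\<lambda>l. X l w) \<and> below_on L\<^sub>2 c\<^sub>2 (\<lambda>l. X l w)
                 \<and> strict_argmax (L\<^sub>1 \<union> L\<^sub>2) i (\<lambda>l. X l w)}
       = F c\<^sub>1 ^ card (L\<^sub>1 \<union> L\<^sub>2) / card (L\<^sub>1 \<union> L\<^sub>2)"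
proof -
  let ?L = "L\<^sub>1 \<union> L\<^sub>2"
  have L_fin: "finite ?L" and L_pos: "?L \<subseteq> {1..}" using L by auto
  have "prob {w\<in>space M. below_on L\<^sub>1 c\<^sub>1 (\<lambda>l. X l w) \<and> below_on L\<^sub>2 c\<^sub>2 (\<lambda>l. X l w)
                 \<and> strict_argmax ?L i (\<lambda>l. X l w)}
      = prob {w\<in>space M. below_on ?L c\<^sub>1 (\<lambda>l. X l w) \<and> strict_argmax ?L i (\<lambda>l. X l w)}"
    using below_on_strict_argmax_iff[OF i c] by simp
  also have "\<dots> = prob {w\<in>space M. below_on ?L c\<^sub>1 (\<lambda>l. X l w)} / card ?L"
  proof (rule prob_strict_argmax_uniform[OF L_fin L_pos order.refl])
    show "i \<in> ?L" using i by simp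
    show "cylinder_pred ?L (below_on ?L c\<^sub>1)" using L_fin by (rule cylinder_pred_below_on) simp
    show "below_on ?L c\<^sub>1 (x \<circ> Transposition.transpose i' i) = below_on ?L c\<^sub>1 x" if "i' \<in> ?L" for i' x
      using that i by (simp add: below_on_comp_transpose)
  qed
  also have "prob {w\<in>space M. below_on ?L c\<^sub>1 (\<lambda>l. X l w)} = F c\<^sub>1 ^ card ?L"
    using prob_below_on_below_on[of ?L "{}" c\<^sub>1] L by (simp add: below_on_def)
  finally show ?thesis .
qed

lemma prob_below_on_strict_argmax_second_block:
  assumes L: "finite L\<^sub>1" "finite L\<^sub>2" "L\<^sub>1 \<subseteq> {1..}" "L\<^sub>2 \<subseteq> {1..}" "L\<^sub>1 \<inter> L\<^sub>2 = {}"
    and k: "k \<in> L\<^sub>2" and c: "c\<^sub>1 \<le> c\<^sub>2"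
  shows "prob {w\<in>space M. below_on L\<^sub>1 c\<^sub>1 (\<lambda>l. X l w) \<and> below_on L\<^sub>2 c\<^sub>2 (\<lambda>l. X l w)
                 \<and> strict_argmax (L\<^sub>1 \<union> L\<^sub>2) k (\<lambda>l. X l w)}
       = (F c\<^sub>1 ^ card L\<^sub>1 * F c\<^sub>2 ^ card L\<^sub>2
          - card L\<^sub>1 * F c\<^sub>1 ^ card (L\<^sub>1 \<union> L\<^sub>2) / card (L\<^sub>1 \<union> L\<^sub>2)) / card L\<^sub>2"
proof -
  let ?L = "L\<^sub>1 \<union> L\<^sub>2"
  let ?T = "\<lambda>x. below_on L\<^sub>1 c\<^sub>1 x \<and> below_on L\<^sub>2 c\<^sub>2 x"
  let ?p = "\<lambda>i. prob {w\<in>space M. ?T (\<lambda>l. X l w) \<and> strict_argmax ?L i (\<lambda>l. X l w)}"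
  have L_fin: "finite ?L" and L_pos: "?L \<subseteq> {1..}" using L by auto
  have T: "cylinder_pred ?L ?T" using L by (intro cylinder_pred_conj cylinder_pred_below_on) auto
  have first: "?p i = F c\<^sub>1 ^ card ?L / card ?L" if "i \<in> L\<^sub>1" for i
    using prob_below_on_strict_argmax_first_block[OF L(1-4) that c] by simp
  have second: "?p i = ?p k" if "i \<in> L\<^sub>2" for i
  proof (rule prob_strict_argmax_transpose[OF L_fin L_pos L_fin order.refl _ _ T])
    show "i \<in> ?L" "k \<in> ?L" using that k by auto
    have "i \<notin> L\<^sub>1" "k \<notin> L\<^sub>1" using that k L(5) by auto
    with that k show "?T (x \<circ> Transposition.transpose i k) = ?T x" for x
      by (simp add: below_on_comp_transpose)
  qed
  have "F c\<^sub>1 ^ card L\<^sub>1 * F c\<^sub>2 ^ card L\<^sub>2 = (\<Sum>i\<in>?L. ?p i)"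
    using k prob_below_on_below_on[OF L, of c\<^sub>1 c\<^sub>2]
    by (subst sum_prob_strict_argmax[OF L_fin L_pos order.refl _ T]) auto
  also have "\<dots> = (\<Sum>i\<in>L\<^sub>1. ?p i) + (\<Sum>i\<in>L\<^sub>2. ?p i)" using L by (simp add: sum.union_disjoint)
  also have "\<dots> = (\<Sum>i\<in>L\<^sub>1. F c\<^sub>1 ^ card ?L / card ?L) + (\<Sum>i\<in>L\<^sub>2. ?p k)"
    using first second by (intro arg_cong2[where f="(+)"] sum.cong) auto
  finally have "F c\<^sub>1 ^ card L\<^sub>1 * F c\<^sub>2 ^ card L\<^sub>2
      = card L\<^sub>1 * (F c\<^sub>1 ^ card ?L / card ?L) + card L\<^sub>2 * ?p k" by simp
  moreover have "card L\<^sub>2 \<noteq> 0" using k L(2) by auto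
  ultimately show ?thesis by (simp add: field_simps)
qed

lemma prob_two_records:
  assumes JK: "1 \<le> J" "J < K"
  shows "prob {w\<in>space M. is_record X J w \<and> is_record X K w} = 1 / (real J * real K)"
proof -
  let ?I = "{1..K}"
  have I: "finite ?I" "?I \<subseteq> {1..}" by auto
  have "prob {w\<in>space M. True \<and> strict_argmax ?I K (\<lambda>l. X l w)} = prob {w\<in>space M. True} / card ?I"
    by (rule prob_strict_argmax_uniform[OF I order.refl _ cylinder_pred_const]) (use JK in auto)
  then have max_K: "prob {w\<in>space M. strict_argmax ?I K (\<lambda>l. X l w)} = 1 / K"
    by (simp add: prob_space)
  have "prob {w\<in>space M. strict_argmax ?I K (\<lambda>l. X l w) \<and> strict_argmax {1..J} J (\<lambda>l. X l w)}
      = prob {w\<in>space M. strict_argmax ?I K (\<lambda>l. X l w)} / card {1..J}"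
  proof (rule prob_strict_argmax_uniform[OF I])
    show "{1..J} \<subseteq> ?I" "J \<in> {1..J}" using JK by auto
    show "cylinder_pred ?I (strict_argmax ?I K)" using JK by (intro cylinder_pred_strict_argmax) auto
    fix i x assume i: "i \<in> {1..J}"
    have "Transposition.transpose i J permutes ?I" using i JK by (intro permutes_swap_id) auto
    moreover have "Transposition.transpose i J K = K" using i JK by simp
    ultimately show "strict_argmax ?I K (x \<circ> Transposition.transpose i J) = strict_argmax ?I K x"
      by (simp add: strict_argmax_comp_permutes)
  qed
  with max_K show ?thesis by (simp add: is_record_iff_strict_argmax conj_commute)
qed

lemma prob_two_records_below_on:
  assumes JK: "1 \<le> J" "J < K" and c: "c\<^sub>1 \<le> c\<^sub>2"
  shows "prob {w\<in>space M. below_on {1..J} c\<^sub>1 (\<lambda>l. X l w) \<and> below_on {Suc J..K} c\<^sub>2 (\<lambda>l. X l w)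
                 \<and> strict_argmax {1..K} K (\<lambda>l. X l w) \<and> strict_argmax {1..J} J (\<lambda>l. X l w)}
       = (F c\<^sub>1 ^ J * F c\<^sub>2 ^ (K - J) - J * F c\<^sub>1 ^ K / K) / real (K - J) / J"
proof -
  let ?I = "{1..K}"
  let ?T = "\<lambda>x. below_on {1..J} c\<^sub>1 x \<and> below_on {Suc J..K} c\<^sub>2 x \<and> strict_argmax ?I K x"
  have I: "finite ?I" "?I \<subseteq> {1..}" by auto
  have split: "{1..J} \<union> {Suc J..K} = ?I" using JK by auto
  have "prob {w\<in>space M. ?T (\<lambda>l. X l w) \<and> strict_argmax {1..J} J (\<lambda>l. X l w)}
      = prob {w\<in>space M. ?T (\<lambda>l. X l w)} / card {1..J}"
  proof (rule prob_strict_argmax_uniform[OF I])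
    show "{1..J} \<subseteq> ?I" "J \<in> {1..J}" using JK by auto
    show "cylinder_pred ?I ?T"
      using JK by (intro cylinder_pred_conj cylinder_pred_below_on cylinder_pred_strict_argmax) auto
    fix i x assume i: "i \<in> {1..J}"
    have "Transposition.transpose i J permutes ?I" using i JK by (intro permutes_swap_id) auto
    moreover have "Transposition.transpose i J K = K" using i JK by simp
    ultimately show "?T (x \<circ> Transposition.transpose i J) = ?T x"
      using i JK by (simp add: strict_argmax_comp_permutes below_on_comp_transpose)
  qed
  also have "prob {w\<in>space M. ?T (\<lambda>l. X l w)}
      = (F c\<^sub>1 ^ J * F c\<^sub>2 ^ (K - J) - J * F c\<^sub>1 ^ K / K) / real (K - J)"
    using prob_below_on_strict_argmax_second_block[of "{1..J}" "{Suc J..K}" K c\<^sub>1 c\<^sub>2, unfolded split] JK c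
    by simp
  finally show ?thesis by (simp add: conj_assoc)
qed

lemma conditional_prob_two_records:
  assumes JK: "1 \<le> J" "J < K"
  shows "prob {w\<in>space M. X J w \<le> c\<^sub>1 \<and> X K w \<le> c\<^sub>2 \<and> is_record X J w \<and> is_record X K w}
       / prob {w\<in>space M. is_record X J w \<and> is_record X K w}
     = (if c\<^sub>1 < c\<^sub>2 then (K * F c\<^sub>1 ^ J * F c\<^sub>2 ^ (K - J) - J * F c\<^sub>1 ^ K) / real (K - J) else F c\<^sub>2 ^ K)"
proof -
  define c where "c = min c\<^sub>1 c\<^sub>2"
  have "(X J w \<le> c\<^sub>1 \<and> X K w \<le> c\<^sub>2 \<and> is_record X J w \<and> is_record X K w)
      \<longleftrightarrow> below_on {1..J} c (\<lambda>l. X l w) \<and> below_on {Suc J..K} c\<^sub>2 (\<lambda>l. X l w)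
          \<and> strict_argmax {1..K} K (\<lambda>l. X l w) \<and> strict_argmax {1..J} J (\<lambda>l. X l w)" for w
    using two_records_le_iff[OF JK, of "\<lambda>l. X l w" c\<^sub>1 c\<^sub>2] by (simp add: is_record_iff_strict_argmax c_def)
  then have "prob {w\<in>space M. X J w \<le> c\<^sub>1 \<and> X K w \<le> c\<^sub>2 \<and> is_record X J w \<and> is_record X K w}
      = (F c ^ J * F c\<^sub>2 ^ (K - J) - J * F c ^ K / K) / real (K - J) / J"
    using prob_two_records_below_on[OF JK, of c c\<^sub>2] by (simp add: c_def)
  then have ratio: "prob {w\<in>space M. X J w \<le> c\<^sub>1 \<and> X K w \<le> c\<^sub>2 \<and> is_record X J w \<and> is_record X K w}
       / prob {w\<in>space M. is_record X J w \<and> is_record X K w}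
     = (K * F c ^ J * F c\<^sub>2 ^ (K - J) - J * F c ^ K) / real (K - J)"
    using JK by (simp add: prob_two_records field_simps)
  show ?thesis
  proof (cases "c\<^sub>1 < c\<^sub>2")
    case False
    then have "c = c\<^sub>2" by (simp add: c_def)
    have "F c\<^sub>2 ^ J * F c\<^sub>2 ^ (K - J) = F c\<^sub>2 ^ K" using JK by (simp flip: power_add)
    then have "real K * F c ^ J * F c\<^sub>2 ^ (K - J) - real J * F c ^ K = real (K - J) * F c\<^sub>2 ^ K"
      using \<open>c = c\<^sub>2\<close> JK by (simp add: mult.assoc of_nat_diff left_diff_distrib)
    then show ?thesis using ratio False JK by simp
  qed (use ratio in \<open>simp add: c_def\<close>)
qed

end

lemma tendsto_power_powr:
  fixes u :: "nat \<Rightarrow> real" and m :: "nat \<Rightarrow> nat"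
  assumes u: "\<And>n. 0 \<le> u n" and lim: "(\<lambda>n. u n ^ n) \<longlonglongrightarrow> g"
    and m: "(\<lambda>n. real (m n) / real n) \<longlonglongrightarrow> l" and l: "l > 0"
  shows "(\<lambda>n. u n ^ m n) \<longlonglongrightarrow> g powr l"
proof -
  have "(\<lambda>n. (u n ^ n) powr (real (m n) / real n)) \<longlonglongrightarrow> g powr l"
    using lim m l u by (intro tendsto_powr') auto
  moreover have "eventually (\<lambda>n. (u n ^ n) powr (real (m n) / real n) = u n ^ m n) sequentially"
    using order_tendstoD(1)[OF m l] eventually_gt_at_top[of 0]
  proof eventually_elim
    case (elim n)
    then have "m n > 0" by (simp add: zero_less_divide_iff)
    show ?case
    proof (cases "u n = 0")
      case False
      then have "u n > 0" using u[of n] by simp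
      then have "(u n ^ n) powr (real (m n) / real n) = u n powr (real n * (real (m n) / real n))"
        by (simp add: powr_realpow[symmetric] powr_powr)
      also have "\<dots> = u n ^ m n" using \<open>u n > 0\<close> elim by (simp add: powr_realpow)
      finally show ?thesis .
    qed (use elim \<open>m n > 0\<close> in \<open>simp add: power_0_left\<close>)
  qed
  ultimately show ?thesis by (rule Lim_transform_eventually)
qed

lemma tendsto_two_records_formula:
  fixes u v :: "nat \<Rightarrow> real" and j k :: "nat \<Rightarrow> nat"
  assumes u: "\<And>n. 0 \<le> u n" "(\<lambda>n. u n ^ n) \<longlonglongrightarrow> g" and v: "\<And>n. 0 \<le> v n" "(\<lambda>n. v n ^ n) \<longlonglongrightarrow> h"
    and jk: "\<And>n. j n < k n"
    and j: "(\<lambda>n. real (j n) / real n) \<longlonglongrightarrow> l\<^sub>1" "l\<^sub>1 > 0"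
    and k: "(\<lambda>n. real (k n) / real n) \<longlonglongrightarrow> l\<^sub>2" "l\<^sub>2 > l\<^sub>1"
  shows "(\<lambda>n. (k n * u n ^ j n * v n ^ (k n - j n) - j n * u n ^ k n) / real (k n - j n))
    \<longlonglongrightarrow> g powr l\<^sub>1 * (l\<^sub>2 / (l\<^sub>2 - l\<^sub>1) * h powr (l\<^sub>2 - l\<^sub>1) - l\<^sub>1 / (l\<^sub>2 - l\<^sub>1) * g powr (l\<^sub>2 - l\<^sub>1))"
proof -
  let ?r = "\<lambda>m n. real (m n) / real n"
  have kj: "(\<lambda>n. ?r (\<lambda>n. k n - j n) n) \<longlonglongrightarrow> l\<^sub>2 - l\<^sub>1"
  proof -
    have "?r (\<lambda>n. k n - j n) n = ?r k n - ?r j n" for n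
      using jk[of n] by (simp add: of_nat_diff diff_divide_distrib)
    then show ?thesis using tendsto_diff[OF k(1) j(1)] by simp
  qed
  have "(\<lambda>n. ?r k n / ?r (\<lambda>n. k n - j n) n * u n ^ j n * v n ^ (k n - j n)
            - ?r j n / ?r (\<lambda>n. k n - j n) n * u n ^ k n)
    \<longlonglongrightarrow> l\<^sub>2 / (l\<^sub>2 - l\<^sub>1) * g powr l\<^sub>1 * h powr (l\<^sub>2 - l\<^sub>1) - l\<^sub>1 / (l\<^sub>2 - l\<^sub>1) * g powr l\<^sub>2"
    using j k kj
    by (intro tendsto_intros tendsto_power_powr[OF u] tendsto_power_powr[OF v]) auto
  moreover have "eventually (\<lambda>n. ?r k n / ?r (\<lambda>n. k n - j n) n * u n ^ j n * v n ^ (k n - j n)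
            - ?r j n / ?r (\<lambda>n. k n - j n) n * u n ^ k n
      = (k n * u n ^ j n * v n ^ (k n - j n) - j n * u n ^ k n) / real (k n - j n)) sequentially"
    using eventually_gt_at_top[of 0]
  proof eventually_elim
    case (elim n)
    have quotients: "K / N / (D / N) * U * V - J / N / (D / N) * W = (K * U * V - J * W) / D"
      if "N \<noteq> 0" "D \<noteq> 0" for K J N D U V W :: real
      using that by (simp add: field_simps)
    show ?case using elim jk[of n] by (intro quotients) auto
  qed
  moreover have "g powr l\<^sub>2 = g powr l\<^sub>1 * g powr (l\<^sub>2 - l\<^sub>1)" by (simp flip: powr_add)
  ultimately show ?thesis by (simp add: Lim_transform_eventually algebra_simps)
qed

theorem corollary10:
  fixes M :: "'a measure" and X :: "nat \<Rightarrow> 'a \<Rightarrow> real" and F G :: "real \<Rightarrow> real"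
    and a b :: "nat \<Rightarrow> real" and j k :: "nat \<Rightarrow> nat" and l1 l2 y1 y2 :: real
  assumes "prob_space M"
    and "\<And>i. i \<ge> 1 \<Longrightarrow> X i \<in> borel_measurable M"
    and "prob_space.indep_vars M (\<lambda>_. borel) X {1..}"
    and "\<And>i x. i \<ge> 1 \<Longrightarrow> F x = measure M {w \<in> space M. X i w \<le> x}"
    and "continuous_on UNIV F"
    and "max_domain_attr F G a b"
    and "\<And>n. 1 \<le> j n" and "\<And>n. j n < k n"
    and "(\<lambda>n. real (j n) / real n) \<longlonglongrightarrow> l1" and "l1 > 0"
    and "(\<lambda>n. real (k n) / real n) \<longlonglongrightarrow> l2" and "l2 > l1"
  shows "(\<lambda>n. measure M {w \<in> space M. (X (j n) w - b n) / a n \<le> y1 \<and> (X (k n) w - b n) / a n \<le> y2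
                  \<and> is_record X (j n) w \<and> is_record X (k n) w}
            / measure M {w \<in> space M. is_record X (j n) w \<and> is_record X (k n) w})
         \<longlonglongrightarrow> G_lam G l1 l2 y1 y2"
proof -
  interpret iid_continuous M X F
    using assms(1-5) by (simp add: iid_continuous_def iid_continuous_axioms_def)
  have a: "\<And>n. a n > 0" and G: "\<And>y. (\<lambda>n. F (a n * y + b n) ^ n) \<longlonglongrightarrow> G y"
    using assms(6) by (auto simp: max_domain_attr_def)
  have F_nonneg: "0 \<le> F x" for x using cdf_X[of 1 x] by simp
  have rescale: "(x - b n) / a n \<le> y \<longleftrightarrow> x \<le> a n * y + b n" for x y n
    using a[of n] by (simp add: pos_divide_le_eq algebra_simps)
  have less_iff: "a n * y1 < a n * y2 \<longleftrightarrow> y1 < y2" for n using a[of n] by simp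
  note ratio = conditional_prob_two_records[OF assms(7,8)]
  show ?thesis
  proof (cases "y1 < y2")
    case True
    with tendsto_two_records_formula[OF F_nonneg G F_nonneg G assms(8-12)]
    show ?thesis by (simp add: ratio rescale less_iff G_lam_def)
  next
    case False
    with tendsto_power_powr[OF F_nonneg G assms(11)] assms(10,12)
    show ?thesis by (simp add: ratio rescale less_iff G_lam_def)
  qed
qed

end
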